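(* Let $G$ be a finite simple graph on $[d]$ and $<$ a monomial order on $R[G]$. Let $\mathcal{G}_1$ be the reduced Gröbner basis of $J_G$ with respect to $<$, and let $\mathcal{G}_2=\{x_Sx_T : S,T\in S(G),\ S\cap T\neq\emptyset\}$. Then $\mathcal{G}=(\mathcal{G}_1\setminus M_G)\cup\mathcal{G}_2$ is the reduced Gröbner basis of $K_G$ with respect to $<$.
   Context: A stable set of $G$ is a subset of $[d]$ with no edge of $G$ (including $\emptyset$ and singletons); $S(G)$ is the set of stable sets; $R[G]=\mathbb{K}[x_S : S\in S(G)]$ over a field $\mathbb{K}$, all variables of degree $1$. $J_G$ is the ideal generated by all $x_{S_1}x_{S_2}-x_{S_3}x_{S_4}$ with $S_i\in S(G)$, $S_1\cap S_2=S_3\cap S_4=\emptyset$, $S_1\cup S_2=S_3\cup S_4$ (the binomials ${\bf x}_f-{\bf x}_g$ for $2$-colorings $f,g$ of a common induced subgraph). $M_G=\langle x_Sx_T : S,T\in S(G),\ S\cap T\neq\emptyset\rangle$ and $K_G=J_G+M_G$. A Gröbner basis of $I$ w.r.t. $<$ is a finite subset of $I$ whose leading monomials generate the initial ideal ${\rm in}_<(I)$; it is reduced if all leading coefficients are $1$ and no monomial of any element lies in the ideal generated by the leading monomials of the other elements. *)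

theory Defs
  imports Main "HOL-Library.Poly_Mapping"
begin

text \<open>Multivariate polynomials: a monomial is a finitely supported exponent vector,
a polynomial is a finitely supported map from monomials to coefficients.\<close>

type_synonym 'v monom = "'v \<Rightarrow>\<^sub>0 nat"
type_synonym ('v, 'k) mpoly = "'v monom \<Rightarrow>\<^sub>0 'k"

definition monom_poly :: "'v monom \<Rightarrow> ('v, 'k::zero_neq_one) mpoly" where
  "monom_poly m = Poly_Mapping.single m 1"

definition var :: "'v \<Rightarrow> ('v, 'k::zero_neq_one) mpoly" where
  "var v = monom_poly (Poly_Mapping.single v 1)"

definition poly_ring :: "'v set \<Rightarrow> ('v, 'k::zero) mpoly set" where
  "poly_ring V = {p :: ('v, 'k) mpoly. \<forall>m \<in> Poly_Mapping.keys p. Poly_Mapping.keys m \<subseteq> V}"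

definition ideal_gen :: "'v set \<Rightarrow> ('v, 'k::comm_ring_1) mpoly set \<Rightarrow> ('v, 'k) mpoly set" where
  "ideal_gen V B = {(\<Sum>b\<in>F. q b * b) | F q. finite F \<and> F \<subseteq> B \<and> (\<forall>b\<in>F. q b \<in> poly_ring V)}"

definition monomial_order :: "'v set \<Rightarrow> ('v monom \<Rightarrow> 'v monom \<Rightarrow> bool) \<Rightarrow> bool" where
  "monomial_order V lt \<longleftrightarrow>
     (\<forall>m. Poly_Mapping.keys m \<subseteq> V \<longrightarrow> \<not> lt m m) \<and>
     (\<forall>m n k. Poly_Mapping.keys m \<subseteq> V \<longrightarrow> Poly_Mapping.keys n \<subseteq> V \<longrightarrow> Poly_Mapping.keys k \<subseteq> V \<longrightarrow> lt m n \<longrightarrow> lt n k \<longrightarrow> lt m k) \<and>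
     (\<forall>m n. Poly_Mapping.keys m \<subseteq> V \<longrightarrow> Poly_Mapping.keys n \<subseteq> V \<longrightarrow> m = n \<or> lt m n \<or> lt n m) \<and>
     wf {(m, n). Poly_Mapping.keys m \<subseteq> V \<and> Poly_Mapping.keys n \<subseteq> V \<and> lt m n} \<and>
     (\<forall>m n k. Poly_Mapping.keys m \<subseteq> V \<longrightarrow> Poly_Mapping.keys n \<subseteq> V \<longrightarrow> Poly_Mapping.keys k \<subseteq> V \<longrightarrow> lt m n \<longrightarrow> lt (m + k) (n + k))"

definition lm :: "('v monom \<Rightarrow> 'v monom \<Rightarrow> bool) \<Rightarrow> ('v, 'k::zero) mpoly \<Rightarrow> 'v monom" where
  "lm lt p = (THE m. m \<in> Poly_Mapping.keys p \<and> (\<forall>m' \<in> Poly_Mapping.keys p. m' \<noteq> m \<longrightarrow> lt m' m))"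

definition lc :: "('v monom \<Rightarrow> 'v monom \<Rightarrow> bool) \<Rightarrow> ('v, 'k::zero) mpoly \<Rightarrow> 'k" where
  "lc lt p = Poly_Mapping.lookup p (lm lt p)"

definition initial_ideal :: "'v set \<Rightarrow> ('v monom \<Rightarrow> 'v monom \<Rightarrow> bool) \<Rightarrow> ('v, 'k::comm_ring_1) mpoly set \<Rightarrow> ('v, 'k) mpoly set" where
  "initial_ideal V lt I = ideal_gen V {monom_poly (lm lt p) | p. p \<in> I \<and> p \<noteq> 0}"

definition groebner_basis :: "'v set \<Rightarrow> ('v monom \<Rightarrow> 'v monom \<Rightarrow> bool) \<Rightarrow> ('v, 'k::comm_ring_1) mpoly set \<Rightarrow> ('v, 'k) mpoly set \<Rightarrow> bool" where
  "groebner_basis V lt I Gb \<longleftrightarrow> finite Gb \<and> Gb \<subseteq> I \<and>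
     ideal_gen V {monom_poly (lm lt g) | g. g \<in> Gb \<and> g \<noteq> 0} = initial_ideal V lt I"

definition reduced_groebner_basis :: "'v set \<Rightarrow> ('v monom \<Rightarrow> 'v monom \<Rightarrow> bool) \<Rightarrow> ('v, 'k::comm_ring_1) mpoly set \<Rightarrow> ('v, 'k) mpoly set \<Rightarrow> bool" where
  "reduced_groebner_basis V lt I Gb \<longleftrightarrow> groebner_basis V lt I Gb \<and>
     (\<forall>g \<in> Gb. g \<noteq> 0 \<and> lc lt g = 1 \<and>
        (\<forall>m \<in> Poly_Mapping.keys g. (monom_poly m :: ('v, 'k) mpoly) \<notin> ideal_gen V {monom_poly (lm lt h) | h. h \<in> Gb - {g} \<and> h \<noteq> 0}))"

definition simple_graph :: "nat \<Rightarrow> nat set set \<Rightarrow> bool" where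
  "simple_graph d E \<longleftrightarrow> (\<forall>e \<in> E. e \<subseteq> {1..d} \<and> card e = 2)"

definition stable_sets :: "nat \<Rightarrow> nat set set \<Rightarrow> nat set set" where
  "stable_sets d E = {S. S \<subseteq> {1..d} \<and> (\<forall>e \<in> E. \<not> e \<subseteq> S)}"

text \<open>R[G] has variables x_S for S in S(G); the variable x_S is var S.\<close>

definition J_gens :: "nat \<Rightarrow> nat set set \<Rightarrow> (nat set, 'k::comm_ring_1) mpoly set" where
  "J_gens d E = {var S1 * var S2 - var S3 * var S4 | S1 S2 S3 S4.
      S1 \<in> stable_sets d E \<and> S2 \<in> stable_sets d E \<and> S3 \<in> stable_sets d E \<and> S4 \<in> stable_sets d E \<and>
      S1 \<inter> S2 = {} \<and> S3 \<inter> S4 = {} \<and> S1 \<union> S2 = S3 \<union> S4}"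

definition M_gens :: "nat \<Rightarrow> nat set set \<Rightarrow> (nat set, 'k::comm_ring_1) mpoly set" where
  "M_gens d E = {var S * var T | S T. S \<in> stable_sets d E \<and> T \<in> stable_sets d E \<and> S \<inter> T \<noteq> {}}"

definition J_ideal :: "nat \<Rightarrow> nat set set \<Rightarrow> (nat set, 'k::comm_ring_1) mpoly set" where
  "J_ideal d E = ideal_gen (stable_sets d E) (J_gens d E)"

definition M_ideal :: "nat \<Rightarrow> nat set set \<Rightarrow> (nat set, 'k::comm_ring_1) mpoly set" where
  "M_ideal d E = ideal_gen (stable_sets d E) (M_gens d E)"

definition K_ideal :: "nat \<Rightarrow> nat set set \<Rightarrow> (nat set, 'k::comm_ring_1) mpoly set" where
  "K_ideal d E = ideal_gen (stable_sets d E) (J_gens d E \<union> M_gens d E)"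

end

theory Submission
  imports Defs
begin

text \<open>Call a monomial in the variables x_S pairwise disjoint if no vertex lies in two of its
factors; these are exactly the monomials outside M_G. Every generator of J_G is homogeneous for
the vertex multidegree (how many factors contain a given vertex), and disjointness depends only on
this multidegree, so the disjoint part of an element of J_G again lies in J_G. Hence an element of
the reduced Groebner basis of J_G is supported either on disjoint monomials only, or on
non-disjoint ones only, and then it lies in M_G. For p in K_G, either the leading monomial of p is
divisible by some x_S x_T with S and T meeting, or it is disjoint, and then it is also the leading
monomial of the disjoint part of p, which lies in J_G. Reducedness comes down to the fact that all
monomials occurring in K_G have degree at least 2.\<close>

section \<open>Polynomial rings and generated ideals\<close>

lemma keys_add_monom: "Poly_Mapping.keys ((a::'v monom) + b) = Poly_Mapping.keys a \<union> Poly_Mapping.keys b"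
  by (auto simp: in_keys_iff lookup_add)

lemma poly_ringI: "(\<And>m. m \<in> Poly_Mapping.keys p \<Longrightarrow> Poly_Mapping.keys m \<subseteq> V) \<Longrightarrow> p \<in> poly_ring V"
  by (simp add: poly_ring_def)

lemma poly_ringD: "p \<in> poly_ring V \<Longrightarrow> m \<in> Poly_Mapping.keys p \<Longrightarrow> Poly_Mapping.keys m \<subseteq> V"
  by (simp add: poly_ring_def)

lemma poly_ring_zero: "0 \<in> poly_ring V"
  by (simp add: poly_ring_def)

lemma poly_ring_single: "Poly_Mapping.keys m \<subseteq> V \<Longrightarrow> Poly_Mapping.single m c \<in> poly_ring V"
  by (simp add: poly_ring_def)

lemma poly_ring_add: "p \<in> poly_ring V \<Longrightarrow> q \<in> poly_ring V \<Longrightarrow> p + q \<in> poly_ring V"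
  using keys_add[of p q] by (intro poly_ringI) (auto dest: poly_ringD)

lemma poly_ring_mult:
  assumes "p \<in> poly_ring V" "q \<in> poly_ring V"
  shows "p * (q::('v, 'k::comm_ring_1) mpoly) \<in> poly_ring V"
proof (rule poly_ringI)
  fix m assume "m \<in> Poly_Mapping.keys (p * q)"
  then obtain a b where "a \<in> Poly_Mapping.keys p" "b \<in> Poly_Mapping.keys q" "m = a + b"
    using keys_mult[of p q] by blast
  with assms show "Poly_Mapping.keys m \<subseteq> V"
    by (auto simp: keys_add_monom dest: poly_ringD)
qed

lemma poly_ring_sum:
  "(\<And>x. x \<in> A \<Longrightarrow> f x \<in> poly_ring V) \<Longrightarrow> sum f A \<in> poly_ring V"
  by (induction A rule: infinite_finite_induct) (simp_all add: poly_ring_zero poly_ring_add)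

lemma ideal_genI:
  "finite F \<Longrightarrow> F \<subseteq> B \<Longrightarrow> (\<And>b. b \<in> F \<Longrightarrow> q b \<in> poly_ring V) \<Longrightarrow>
    (\<Sum>b\<in>F. q b * b) \<in> ideal_gen V B"
  unfolding ideal_gen_def by blast

lemma ideal_genE:
  assumes "p \<in> ideal_gen V B"
  obtains F q where "finite F" "F \<subseteq> B" "\<forall>b\<in>F. q b \<in> poly_ring V" "p = (\<Sum>b\<in>F. q b * b)"
  using assms unfolding ideal_gen_def by blast

lemma ideal_gen_base: "b \<in> B \<Longrightarrow> b \<in> ideal_gen V B"
  using ideal_genI[of "{b}" B "\<lambda>_. 1" V] by (simp add: poly_ring_def)

lemma ideal_gen_add:
  assumes "p \<in> ideal_gen V B" "q \<in> ideal_gen V B"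
  shows "p + q \<in> ideal_gen V B"
proof -
  obtain F1 q1 where 1: "finite F1" "F1 \<subseteq> B" "\<forall>b\<in>F1. q1 b \<in> poly_ring V"
    "p = (\<Sum>b\<in>F1. q1 b * b)"
    using assms(1) by (rule ideal_genE)
  obtain F2 q2 where 2: "finite F2" "F2 \<subseteq> B" "\<forall>b\<in>F2. q2 b \<in> poly_ring V"
    "q = (\<Sum>b\<in>F2. q2 b * b)"
    using assms(2) by (rule ideal_genE)
  define r where "r b = (if b \<in> F1 then q1 b else 0) + (if b \<in> F2 then q2 b else 0)" for b
  have "(\<Sum>b\<in>F1 \<union> F2. r b * b) = (\<Sum>b\<in>F1 \<union> F2. if b \<in> F1 then q1 b * b else 0)
      + (\<Sum>b\<in>F1 \<union> F2. if b \<in> F2 then q2 b * b else 0)"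
    unfolding sum.distrib[symmetric] by (rule sum.cong) (auto simp: r_def distrib_right)
  also have "\<dots> = p + q"
    using 1 2 by (simp add: sum.inter_restrict[symmetric] Un_Int_eq)
  finally have "p + q = (\<Sum>b\<in>F1 \<union> F2. r b * b)" ..
  moreover have "(\<Sum>b\<in>F1 \<union> F2. r b * b) \<in> ideal_gen V B"
    using 1 2 by (intro ideal_genI) (simp_all add: r_def poly_ring_add poly_ring_zero)
  ultimately show ?thesis by simp
qed

lemma ideal_gen_mult:
  assumes "p \<in> ideal_gen V B" "r \<in> poly_ring V"
  shows "r * p \<in> ideal_gen V B"
proof -
  obtain F q where p: "finite F" "F \<subseteq> B" "\<forall>b\<in>F. q b \<in> poly_ring V"
    "p = (\<Sum>b\<in>F. q b * b)"
    using assms(1) by (rule ideal_genE)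
  have "r * p = (\<Sum>b\<in>F. (r * q b) * b)"
    using p by (simp add: sum_distrib_left mult.assoc)
  also have "\<dots> \<in> ideal_gen V B"
    using p assms(2) by (intro ideal_genI) (simp_all add: poly_ring_mult)
  finally show ?thesis .
qed

lemma ideal_gen_sum:
  "(\<And>x. x \<in> A \<Longrightarrow> f x \<in> ideal_gen V B) \<Longrightarrow> sum f A \<in> ideal_gen V B"
proof (induction A rule: infinite_finite_induct)
  case (insert x F)
  then show ?case by (simp add: ideal_gen_add)
qed (use ideal_genI[of "{}"] in simp_all)

lemma ideal_gen_mono: "B \<subseteq> C \<Longrightarrow> ideal_gen V B \<subseteq> ideal_gen V C"
  unfolding ideal_gen_def by blast

lemma ideal_gen_subset:
  assumes "B \<subseteq> ideal_gen V C"
  shows "ideal_gen V B \<subseteq> ideal_gen V C"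
proof
  fix p assume "p \<in> ideal_gen V B"
  then obtain F q where "finite F" "F \<subseteq> B" "\<forall>b\<in>F. q b \<in> poly_ring V" "p = (\<Sum>b\<in>F. q b * b)"
    by (rule ideal_genE)
  with assms show "p \<in> ideal_gen V C"
    by (auto intro!: ideal_gen_sum ideal_gen_mult)
qed

lemma ideal_gen_subset_poly_ring:
  assumes "B \<subseteq> poly_ring V"
  shows "ideal_gen V B \<subseteq> poly_ring V"
proof
  fix p assume "p \<in> ideal_gen V B"
  then obtain F q where "finite F" "F \<subseteq> B" "\<forall>b\<in>F. q b \<in> poly_ring V" "p = (\<Sum>b\<in>F. q b * b)"
    by (rule ideal_genE)
  with assms show "p \<in> poly_ring V"
    by (auto intro!: poly_ring_sum poly_ring_mult)
qed

lemma ideal_gen_Un_decomp: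
  assumes "p \<in> ideal_gen V (A \<union> B)"
  obtains a b where "a \<in> ideal_gen V A" "b \<in> ideal_gen V B" "p = a + b"
proof -
  obtain F q where F: "finite F" "F \<subseteq> A \<union> B" "\<forall>b\<in>F. q b \<in> poly_ring V"
    "p = (\<Sum>b\<in>F. q b * b)"
    using assms by (rule ideal_genE)
  have "p = (\<Sum>b\<in>F \<inter> A. q b * b) + (\<Sum>b\<in>F - A. q b * b)"
    using F by (simp add: sum.Int_Diff)
  moreover have "(\<Sum>b\<in>F \<inter> A. q b * b) \<in> ideal_gen V A"
    using F by (intro ideal_genI) auto
  moreover have "(\<Sum>b\<in>F - A. q b * b) \<in> ideal_gen V B"
    using F by (intro ideal_genI) auto
  ultimately show ?thesis using that by blast
qed

lemma keys_ideal_gen: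
  assumes "p \<in> ideal_gen V B" "m \<in> Poly_Mapping.keys p"
  obtains b a k where "b \<in> B" "a \<in> Poly_Mapping.keys b" "m = k + a"
proof -
  obtain F q where F: "finite F" "F \<subseteq> B" "\<forall>b\<in>F. q b \<in> poly_ring V" "p = (\<Sum>b\<in>F. q b * b)"
    using assms(1) by (rule ideal_genE)
  then obtain b where b: "b \<in> F" "m \<in> Poly_Mapping.keys (q b * b)"
    using assms(2) keys_sum[of "\<lambda>b. q b * b" F] by blast
  then obtain k a where "a \<in> Poly_Mapping.keys b" "m = k + a"
    using keys_mult[of "q b" b] by blast
  with b F(2) that show ?thesis by blast
qed

section \<open>Restricting a polynomial to a set of monomials\<close>

definition restrict_poly :: "('v monom \<Rightarrow> bool) \<Rightarrow> ('v, 'k::zero) mpoly \<Rightarrow> ('v, 'k) mpoly" where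
  "restrict_poly P p = Poly_Mapping.mapp (\<lambda>m c. if P m then c else 0) p"

lemma lookup_restrict_poly:
  "Poly_Mapping.lookup (restrict_poly P p) m = (if P m then Poly_Mapping.lookup p m else 0)"
  by (simp add: restrict_poly_def lookup_mapp in_keys_iff when_def)

lemma keys_restrict_poly: "Poly_Mapping.keys (restrict_poly P p) = {m \<in> Poly_Mapping.keys p. P m}"
  by (auto simp: in_keys_iff lookup_restrict_poly split: if_splits)

lemma restrict_poly_eq_self: "(\<And>m. m \<in> Poly_Mapping.keys p \<Longrightarrow> P m) \<Longrightarrow> restrict_poly P p = p"
  by (rule poly_mapping_eqI) (auto simp: lookup_restrict_poly in_keys_iff)

lemma restrict_poly_eq_zero: "(\<And>m. m \<in> Poly_Mapping.keys p \<Longrightarrow> \<not> P m) \<Longrightarrow> restrict_poly P p = 0"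
  by (rule poly_mapping_eqI) (auto simp: lookup_restrict_poly in_keys_iff)

lemma restrict_poly_single:
  "restrict_poly P (Poly_Mapping.single m c) = (if P m then Poly_Mapping.single m c else 0)"
  by (cases "P m") (auto intro!: restrict_poly_eq_self restrict_poly_eq_zero split: if_splits)

lemma restrict_poly_add:
  "restrict_poly P (p + q) = restrict_poly P p + restrict_poly P (q :: ('v, 'k::monoid_add) mpoly)"
  by (rule poly_mapping_eqI) (simp add: lookup_restrict_poly lookup_add)

lemma restrict_poly_sum:
  "restrict_poly P (sum f A) = (\<Sum>x\<in>A. restrict_poly P (f x :: ('v, 'k::comm_monoid_add) mpoly))"
  by (rule poly_mapping_eqI) (simp add: lookup_restrict_poly lookup_sum)

lemma restrict_poly_poly_ring: "p \<in> poly_ring V \<Longrightarrow> restrict_poly P p \<in> poly_ring V"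
  by (intro poly_ringI) (auto simp: keys_restrict_poly dest: poly_ringD)

lemma sum_single_lookup: "(\<Sum>m\<in>Poly_Mapping.keys p. Poly_Mapping.single m (Poly_Mapping.lookup p m)) = p"
  by (rule poly_mapping_eqI) (simp add: lookup_sum lookup_single when_def in_keys_iff)

lemma restrict_poly_mult_homogeneous:
  fixes q b :: "('v, 'k::comm_ring_1) mpoly"
  assumes hom: "\<And>a a' k. a \<in> Poly_Mapping.keys b \<Longrightarrow> a' \<in> Poly_Mapping.keys b \<Longrightarrow> P (k + a) = P (k + a')"
  shows "restrict_poly P (q * b) = restrict_poly (\<lambda>k. \<exists>a\<in>Poly_Mapping.keys b. P (k + a)) q * b"
proof -
  let ?Q = "\<lambda>k. \<exists>a\<in>Poly_Mapping.keys b. P (k + a)"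
  have summand: "restrict_poly P (Poly_Mapping.single l c * b) = restrict_poly ?Q (Poly_Mapping.single l c) * b"
    for l c
  proof -
    have keys: "Poly_Mapping.keys (Poly_Mapping.single l c * b) \<subseteq> {l + a | a. a \<in> Poly_Mapping.keys b}"
      using keys_mult[of "Poly_Mapping.single l c" b] by (auto split: if_splits)
    show ?thesis
    proof (cases "?Q l")
      case True
      then have "\<forall>a\<in>Poly_Mapping.keys b. P (l + a)"
        using hom by blast
      with keys True show ?thesis
        by (auto simp: restrict_poly_single intro!: restrict_poly_eq_self)
    next
      case False
      with keys show ?thesis
        by (auto simp: restrict_poly_single intro!: restrict_poly_eq_zero)
    qed
  qed
  have "q * b = (\<Sum>l\<in>Poly_Mapping.keys q. Poly_Mapping.single l (Poly_Mapping.lookup q l) * b)"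
    by (simp add: sum_single_lookup flip: sum_distrib_right)
  also have "restrict_poly P \<dots> = restrict_poly ?Q q * b"
    by (subst (2) sum_single_lookup[of q, symmetric])
      (simp add: restrict_poly_sum summand sum_distrib_right)
  finally show ?thesis .
qed

lemma restrict_poly_ideal_gen:
  fixes B :: "('v, 'k::comm_ring_1) mpoly set"
  assumes "p \<in> ideal_gen V B"
    and hom: "\<And>b a a' k. b \<in> B \<Longrightarrow> a \<in> Poly_Mapping.keys b \<Longrightarrow> a' \<in> Poly_Mapping.keys b \<Longrightarrow>
      P (k + a) = P (k + a')"
  shows "restrict_poly P p \<in> ideal_gen V B"
proof -
  obtain F q where F: "finite F" "F \<subseteq> B" "\<forall>b\<in>F. q b \<in> poly_ring V" "p = (\<Sum>b\<in>F. q b * b)"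
    using assms(1) by (rule ideal_genE)
  define Q where "Q b k \<longleftrightarrow> (\<exists>a\<in>Poly_Mapping.keys b. P (k + a))" for b :: "('v, 'k) mpoly" and k
  have "restrict_poly P p = (\<Sum>b\<in>F. restrict_poly (Q b) (q b) * b)"
    unfolding F(4) restrict_poly_sum Q_def
    using F(2) hom by (intro sum.cong refl restrict_poly_mult_homogeneous) blast
  also have "\<dots> \<in> ideal_gen V B"
    using F by (intro ideal_genI) (simp_all add: restrict_poly_poly_ring)
  finally show ?thesis .
qed

section \<open>Monomial orders and leading monomials\<close>

lemma monomial_order_irrefl:
  "monomial_order V lt \<Longrightarrow> Poly_Mapping.keys m \<subseteq> V \<Longrightarrow> \<not> lt m m"
  unfolding monomial_order_def by blast

lemma monomial_order_trans:
  "monomial_order V lt \<Longrightarrow> Poly_Mapping.keys m \<subseteq> V \<Longrightarrow> Poly_Mapping.keys n \<subseteq> V \<Longrightarrow>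
    Poly_Mapping.keys k \<subseteq> V \<Longrightarrow> lt m n \<Longrightarrow> lt n k \<Longrightarrow> lt m k"
  unfolding monomial_order_def by blast

lemma monomial_order_total:
  "monomial_order V lt \<Longrightarrow> Poly_Mapping.keys m \<subseteq> V \<Longrightarrow> Poly_Mapping.keys n \<subseteq> V \<Longrightarrow>
    m = n \<or> lt m n \<or> lt n m"
  unfolding monomial_order_def by blast

lemma monomial_order_add:
  "monomial_order V lt \<Longrightarrow> Poly_Mapping.keys m \<subseteq> V \<Longrightarrow> Poly_Mapping.keys n \<subseteq> V \<Longrightarrow>
    Poly_Mapping.keys k \<subseteq> V \<Longrightarrow> lt m n \<Longrightarrow> lt (m + k) (n + k)"
  unfolding monomial_order_def by blast

lemma monomial_order_zero_less:
  assumes mo: "monomial_order V lt" and k: "Poly_Mapping.keys k \<subseteq> V" "k \<noteq> 0"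
  shows "lt 0 k"
proof (rule ccontr)
  assume "\<not> lt 0 k"
  with monomial_order_total[OF mo k(1), of 0] k(2) have "lt k 0" by auto
  define f where "f n = (\<Sum>i<n. k)" for n :: nat
  have keys_f: "Poly_Mapping.keys (f n) \<subseteq> V" for n
    using keys_sum[of "\<lambda>_. k" "{..<n}"] k(1) unfolding f_def by (auto split: if_splits)
  have "lt (k + f n) (0 + f n)" for n
    using monomial_order_add[OF mo k(1) _ keys_f \<open>lt k 0\<close>] by simp
  then have "(f (Suc n), f n) \<in> {(m, n). Poly_Mapping.keys m \<subseteq> V \<and> Poly_Mapping.keys n \<subseteq> V \<and> lt m n}" for n
    using keys_f[of n] keys_f[of "Suc n"] by (simp add: f_def add.commute)
  moreover have "wf {(m, n). Poly_Mapping.keys m \<subseteq> V \<and> Poly_Mapping.keys n \<subseteq> V \<and> lt m n}"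
    using mo unfolding monomial_order_def by blast
  ultimately show False
    unfolding wf_iff_no_infinite_down_chain by blast
qed

lemma monomial_order_not_less_summand:
  assumes mo: "monomial_order V lt" and keys: "Poly_Mapping.keys (k + a) \<subseteq> V"
  shows "\<not> lt (k + a) a"
proof
  assume less: "lt (k + a) a"
  have ka: "Poly_Mapping.keys k \<subseteq> V" "Poly_Mapping.keys a \<subseteq> V"
    using keys by (simp_all add: keys_add_monom)
  show False
  proof (cases "k = 0")
    case True
    with less monomial_order_irrefl[OF mo ka(2)] show False by simp
  next
    case False
    have "lt (0 + a) (k + a)"
      using monomial_order_add[OF mo _ ka(1) ka(2) monomial_order_zero_less[OF mo ka(1) False]] by simp
    with monomial_order_trans[OF mo keys ka(2) keys less] monomial_order_irrefl[OF mo keys]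
    show False by simp
  qed
qed

lemma monomial_order_greatest_exists:
  assumes mo: "monomial_order V lt" and "finite A" "A \<noteq> {}" "\<forall>m\<in>A. Poly_Mapping.keys m \<subseteq> V"
  shows "\<exists>m\<in>A. \<forall>m'\<in>A. m' \<noteq> m \<longrightarrow> lt m' m"
  using assms(2-4)
proof (induction A rule: finite_ne_induct)
  case (insert x F)
  then obtain m where m: "m \<in> F" "\<forall>m'\<in>F. m' \<noteq> m \<longrightarrow> lt m' m" by auto
  have keys: "Poly_Mapping.keys x \<subseteq> V" "Poly_Mapping.keys m \<subseteq> V"
    using insert.prems m(1) by auto
  show ?case
  proof (cases "lt m x")
    case True
    have "lt m' x" if "m' \<in> F" for m'
      using m monomial_order_trans[OF mo _ keys(2,1) _ True] insert.prems that True by fastforce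
    then show ?thesis by blast
  next
    case False
    with monomial_order_total[OF mo keys] m show ?thesis by blast
  qed
qed simp

lemma lm_eqI:
  assumes mo: "monomial_order V lt" and p: "p \<in> poly_ring V"
    and m: "m \<in> Poly_Mapping.keys p" "\<forall>m'\<in>Poly_Mapping.keys p. m' \<noteq> m \<longrightarrow> lt m' m"
  shows "lm lt p = m"
  unfolding lm_def
proof (rule the_equality)
  fix n assume n: "n \<in> Poly_Mapping.keys p \<and> (\<forall>m'\<in>Poly_Mapping.keys p. m' \<noteq> n \<longrightarrow> lt m' n)"
  show "n = m"
  proof (rule ccontr)
    assume "n \<noteq> m"
    with m n have "lt n m" "lt m n" by auto
    with monomial_order_trans[OF mo, of n m n] monomial_order_irrefl[OF mo, of n] m n p
    show False by (auto dest: poly_ringD)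
  qed
qed (use m in blast)

lemma lm_greatest:
  assumes mo: "monomial_order V lt" and p: "p \<in> poly_ring V" "p \<noteq> 0"
  shows "lm lt p \<in> Poly_Mapping.keys p" "\<forall>m\<in>Poly_Mapping.keys p. m \<noteq> lm lt p \<longrightarrow> lt m (lm lt p)"
proof -
  have "\<forall>m\<in>Poly_Mapping.keys p. Poly_Mapping.keys m \<subseteq> V"
    using p(1) by (auto dest: poly_ringD)
  then obtain m where m: "m \<in> Poly_Mapping.keys p" "\<forall>m'\<in>Poly_Mapping.keys p. m' \<noteq> m \<longrightarrow> lt m' m"
    using monomial_order_greatest_exists[OF mo finite_keys, of p] p(2) by auto
  with lm_eqI[OF mo p(1) m] show "lm lt p \<in> Poly_Mapping.keys p"
    "\<forall>m\<in>Poly_Mapping.keys p. m \<noteq> lm lt p \<longrightarrow> lt m (lm lt p)" by simp_all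
qed

lemma lm_single:
  assumes "monomial_order V lt" "Poly_Mapping.keys m \<subseteq> V" "c \<noteq> 0"
  shows "lm lt (Poly_Mapping.single m c) = m"
  using assms by (intro lm_eqI[OF assms(1) poly_ring_single]) auto

lemma lc_single:
  assumes "monomial_order V lt" "Poly_Mapping.keys m \<subseteq> V" "c \<noteq> 0"
  shows "lc lt (Poly_Mapping.single m c) = c"
  by (simp add: lc_def lm_single[OF assms])

lemma lm_eq_of_keys_subset:
  assumes mo: "monomial_order V lt" and p: "p \<in> poly_ring V" "p \<noteq> 0"
    and r: "r \<in> poly_ring V" "Poly_Mapping.keys r \<subseteq> Poly_Mapping.keys p" "lm lt p \<in> Poly_Mapping.keys r"
  shows "lm lt r = lm lt p"
  using lm_greatest[OF mo p] r by (intro lm_eqI[OF mo r(1)]) auto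

section \<open>Groebner bases\<close>

lemma monom_poly_neq_zero: "monom_poly m \<noteq> 0"
  by (metis monom_poly_def lookup_single_eq lookup_zero zero_neq_one)

abbreviation lm_ideal ::
  "'v set \<Rightarrow> ('v monom \<Rightarrow> 'v monom \<Rightarrow> bool) \<Rightarrow> ('v, 'k::comm_ring_1) mpoly set \<Rightarrow> ('v, 'k) mpoly set" where
  "lm_ideal V lt X \<equiv> ideal_gen V {monom_poly (lm lt h) | h. h \<in> X \<and> h \<noteq> 0}"

lemma mem_lm_idealD:
  fixes X :: "('v, 'k::comm_ring_1) mpoly set"
  assumes "monom_poly m \<in> lm_ideal V lt X"
  obtains h k where "h \<in> X" "h \<noteq> 0" "m = k + lm lt h"
proof -
  have "m \<in> Poly_Mapping.keys (monom_poly m :: ('v, 'k) mpoly)"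
    by (simp add: monom_poly_def)
  with assms obtain b a k where "b \<in> {monom_poly (lm lt h) :: ('v, 'k) mpoly | h. h \<in> X \<and> h \<noteq> 0}"
    "a \<in> Poly_Mapping.keys b" "m = k + a"
    by (rule keys_ideal_gen)
  with that show ?thesis by (auto simp: monom_poly_def)
qed

lemma mem_lm_idealI:
  fixes X :: "('v, 'k::comm_ring_1) mpoly set"
  assumes "h \<in> X" "h \<noteq> 0" "Poly_Mapping.keys k \<subseteq> V"
  shows "monom_poly (k + lm lt h) \<in> lm_ideal V lt X"
proof -
  have "monom_poly (k + lm lt h) = Poly_Mapping.single k 1 * (monom_poly (lm lt h) :: ('v, 'k) mpoly)"
    by (simp add: monom_poly_def mult_single)
  also have "\<dots> \<in> lm_ideal V lt X"
    using assms by (intro ideal_gen_mult ideal_gen_base poly_ring_single) auto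
  finally show ?thesis .
qed

lemma groebner_basisI:
  fixes Gb :: "('v, 'k::comm_ring_1) mpoly set"
  assumes mo: "monomial_order V lt" and "finite Gb" "Gb \<subseteq> I" "I \<subseteq> poly_ring V"
    and divisible: "\<And>p. p \<in> I \<Longrightarrow> p \<noteq> 0 \<Longrightarrow> \<exists>g\<in>Gb. g \<noteq> 0 \<and> (\<exists>k. lm lt p = k + lm lt g)"
  shows "groebner_basis V lt I Gb"
  unfolding groebner_basis_def initial_ideal_def
proof (intro conjI equalityI)
  show "lm_ideal V lt Gb \<subseteq> lm_ideal V lt I"
    using \<open>Gb \<subseteq> I\<close> by (intro ideal_gen_mono) blast
  show "lm_ideal V lt I \<subseteq> lm_ideal V lt Gb"
  proof (rule ideal_gen_subset, safe)
    fix p assume p: "p \<in> I" "p \<noteq> 0"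
    then obtain g k where g: "g \<in> Gb" "g \<noteq> 0" "lm lt p = k + lm lt g"
      using divisible by blast
    have "Poly_Mapping.keys (lm lt p) \<subseteq> V"
      using p \<open>I \<subseteq> poly_ring V\<close> lm_greatest(1)[OF mo] by (blast dest: poly_ringD)
    then have "Poly_Mapping.keys k \<subseteq> V"
      using g(3) by (simp add: keys_add_monom)
    with g show "monom_poly (lm lt p) \<in> lm_ideal V lt Gb"
      by (simp add: mem_lm_idealI)
  qed
qed (use assms in auto)

lemma groebner_basis_lm_divisible:
  assumes "groebner_basis V lt I Gb" "p \<in> I" "p \<noteq> 0"
  obtains g k where "g \<in> Gb" "g \<noteq> 0" "lm lt p = k + lm lt g"
proof -
  have "monom_poly (lm lt p) \<in> initial_ideal V lt I"
    unfolding initial_ideal_def using assms(2,3) by (intro ideal_gen_base) blast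
  then have "monom_poly (lm lt p) \<in> lm_ideal V lt Gb"
    using assms(1) by (simp add: groebner_basis_def)
  then show ?thesis using that by (rule mem_lm_idealD)
qed

lemma reduced_groebner_basisD:
  assumes "reduced_groebner_basis V lt I Gb"
  shows "groebner_basis V lt I Gb" "finite Gb" "Gb \<subseteq> I"
    and "g \<in> Gb \<Longrightarrow> g \<noteq> 0" "g \<in> Gb \<Longrightarrow> lc lt g = 1"
    and "g \<in> Gb \<Longrightarrow> m \<in> Poly_Mapping.keys g \<Longrightarrow> monom_poly m \<notin> lm_ideal V lt (Gb - {g})"
  using assms unfolding reduced_groebner_basis_def groebner_basis_def by blast+

lemma reduced_groebner_basis_subset_poly_ring:
  "reduced_groebner_basis V lt I Gb \<Longrightarrow> I \<subseteq> poly_ring V \<Longrightarrow> Gb \<subseteq> poly_ring V"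
  using reduced_groebner_basisD(3) by blast

lemma reduced_groebner_basisI:
  fixes Gb :: "('v, 'k::comm_ring_1) mpoly set"
  assumes "groebner_basis V lt I Gb"
    and "\<And>g. g \<in> Gb \<Longrightarrow> g \<noteq> 0 \<and> lc lt g = 1"
    and irreducible: "\<And>g h m k. g \<in> Gb \<Longrightarrow> h \<in> Gb - {g} \<Longrightarrow> h \<noteq> 0 \<Longrightarrow>
      m \<in> Poly_Mapping.keys g \<Longrightarrow> m \<noteq> k + lm lt h"
  shows "reduced_groebner_basis V lt I Gb"
  unfolding reduced_groebner_basis_def
proof (intro conjI ballI notI assms(1))
  fix g m assume "g \<in> Gb" "m \<in> Poly_Mapping.keys g" "monom_poly m \<in> lm_ideal V lt (Gb - {g})"
  then show False
    by (elim mem_lm_idealD) (use irreducible in blast)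
qed (use assms(2) in blast)+

lemma reduced_groebner_basis_lm_mem_keys:
  fixes Gb :: "('v, 'k::comm_ring_1) mpoly set"
  assumes mo: "monomial_order V lt" and rgb: "reduced_groebner_basis V lt I Gb"
    and "I \<subseteq> poly_ring V" "g \<in> Gb" "r \<in> I" "r \<noteq> 0"
    and keys_r: "Poly_Mapping.keys r \<subseteq> Poly_Mapping.keys g"
  shows "lm lt g \<in> Poly_Mapping.keys r"
proof (rule ccontr)
  assume not_lm: "lm lt g \<notin> Poly_Mapping.keys r"
  have rP: "r \<in> poly_ring V" and gP: "g \<in> poly_ring V"
    using assms reduced_groebner_basisD(3)[OF rgb] by blast+
  have "g \<noteq> 0"
    using reduced_groebner_basisD(4)[OF rgb \<open>g \<in> Gb\<close>] .
  have lm_r: "lm lt r \<in> Poly_Mapping.keys r"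
    using lm_greatest(1)[OF mo rP \<open>r \<noteq> 0\<close>] .
  then have lm_r_g: "lm lt r \<in> Poly_Mapping.keys g"
    using keys_r by blast
  then have keys_lm_r: "Poly_Mapping.keys (lm lt r) \<subseteq> V"
    using gP by (simp add: poly_ringD)
  obtain h k where h: "h \<in> Gb" "h \<noteq> 0" "lm lt r = k + lm lt h"
    using groebner_basis_lm_divisible[OF reduced_groebner_basisD(1)[OF rgb] \<open>r \<in> I\<close> \<open>r \<noteq> 0\<close>] .
  show False
  proof (cases "h = g")
    case True
    have "lm lt r \<noteq> lm lt g"
      using lm_r not_lm by metis
    then have "lt (lm lt r) (lm lt g)"
      using lm_greatest(2)[OF mo gP \<open>g \<noteq> 0\<close>] lm_r_g by blast
    with monomial_order_not_less_summand[OF mo] keys_lm_r h(3) True show False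
      by metis
  next
    case False
    have "Poly_Mapping.keys k \<subseteq> V"
      using keys_lm_r h(3) by (simp add: keys_add_monom)
    then have "monom_poly (lm lt r) \<in> lm_ideal V lt (Gb - {g})"
      using h False mem_lm_idealI[of h "Gb - {g}" k V lt] by simp
    with reduced_groebner_basisD(6)[OF rgb \<open>g \<in> Gb\<close> lm_r_g] show False
      by contradiction
  qed
qed

lemma reduced_groebner_basis_keys_uniform:
  fixes Gb :: "('v, 'k::comm_ring_1) mpoly set"
  assumes mo: "monomial_order V lt" and rgb: "reduced_groebner_basis V lt I Gb"
    and "I \<subseteq> poly_ring V"
    and restrict: "\<And>p. p \<in> I \<Longrightarrow> restrict_poly P p \<in> I"
      "\<And>p. p \<in> I \<Longrightarrow> restrict_poly (\<lambda>m. \<not> P m) p \<in> I"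
    and "g \<in> Gb"
  shows "(\<forall>m\<in>Poly_Mapping.keys g. P m) \<or> (\<forall>m\<in>Poly_Mapping.keys g. \<not> P m)"
proof (rule ccontr)
  assume "\<not> ?thesis"
  then obtain m1 m2 where m: "m1 \<in> Poly_Mapping.keys g" "P m1" "m2 \<in> Poly_Mapping.keys g" "\<not> P m2"
    by blast
  have "g \<in> I"
    using reduced_groebner_basisD(3)[OF rgb] \<open>g \<in> Gb\<close> by blast
  have lm_g: "R (lm lt g)" if "restrict_poly R g \<in> I" "m \<in> Poly_Mapping.keys g" "R m" for R m
  proof -
    have "restrict_poly R g \<noteq> 0"
      using that(2,3) by (auto simp: keys_restrict_poly simp flip: keys_eq_empty)
    then have "lm lt g \<in> Poly_Mapping.keys (restrict_poly R g)"
      using that(1) assms by (intro reduced_groebner_basis_lm_mem_keys[OF mo rgb]) (auto simp: keys_restrict_poly)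
    then show ?thesis
      by (simp add: keys_restrict_poly)
  qed
  from lm_g[OF restrict(1)[OF \<open>g \<in> I\<close>] m(1,2)] lm_g[OF restrict(2)[OF \<open>g \<in> I\<close>] m(3,4)]
  show False by simp
qed

section \<open>The ideals of a graph\<close>

definition vertex_degree :: "'a set monom \<Rightarrow> 'a \<Rightarrow> nat" where
  "vertex_degree m i = (\<Sum>S\<in>Poly_Mapping.keys m. if i \<in> S then Poly_Mapping.lookup m S else 0)"

definition pairwise_disjoint_monom :: "'a set monom \<Rightarrow> bool" where
  "pairwise_disjoint_monom m \<longleftrightarrow> (\<forall>i. vertex_degree m i \<le> 1)"

definition monom_degree :: "'v monom \<Rightarrow> nat" where
  "monom_degree m = (\<Sum>v\<in>Poly_Mapping.keys m. Poly_Mapping.lookup m v)"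

abbreviation pair_monom :: "'v \<Rightarrow> 'v \<Rightarrow> 'v monom" where
  "pair_monom S T \<equiv> Poly_Mapping.single S 1 + Poly_Mapping.single T 1"

lemma vertex_degree_add: "vertex_degree (a + b) i = vertex_degree a i + vertex_degree b i"
  unfolding vertex_degree_def by (rule setsum_keys_plus_distrib) auto

lemma vertex_degree_pair:
  "vertex_degree (pair_monom S T) i = (if i \<in> S then 1 else 0) + (if i \<in> T then 1 else 0)"
  unfolding vertex_degree_add by (simp add: vertex_degree_def)

lemma monom_degree_add: "monom_degree (a + b) = monom_degree a + monom_degree b"
  unfolding monom_degree_def by (rule setsum_keys_plus_distrib) auto

lemma monom_degree_pair: "monom_degree (pair_monom S T) = 2"
  unfolding monom_degree_add by (simp add: monom_degree_def)

lemma monom_degree_eq_0_iff: "monom_degree m = 0 \<longleftrightarrow> m = 0"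
  by (auto simp: monom_degree_def in_keys_iff simp flip: keys_eq_empty)

lemma not_pairwise_disjoint_add: "\<not> pairwise_disjoint_monom a \<Longrightarrow> \<not> pairwise_disjoint_monom (k + a)"
  unfolding pairwise_disjoint_monom_def vertex_degree_add by (meson add_leD2)

lemma not_pairwise_disjoint_pair: "S \<inter> T \<noteq> {} \<Longrightarrow> \<not> pairwise_disjoint_monom (pair_monom S T)"
  unfolding pairwise_disjoint_monom_def vertex_degree_pair by (auto split: if_splits)

lemma not_pairwise_disjoint_obtain_pair:
  assumes "Poly_Mapping.keys m \<subseteq> V" "\<not> pairwise_disjoint_monom m"
  obtains S T k where "S \<in> V" "T \<in> V" "S \<inter> T \<noteq> {}" "m = k + pair_monom S T"
proof -
  have below: "m = (m - pair_monom S T) + pair_monom S T"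
    if "\<And>U. Poly_Mapping.lookup (pair_monom S T) U \<le> Poly_Mapping.lookup m U" for S T
    by (rule poly_mapping_eqI) (use that in \<open>simp add: lookup_add lookup_minus\<close>)
  obtain i where "\<not> vertex_degree m i \<le> 1"
    using assms(2) unfolding pairwise_disjoint_monom_def by blast
  then have "2 \<le> vertex_degree m i" by simp
  moreover define A where "A = {S \<in> Poly_Mapping.keys m. i \<in> S}"
  ultimately have sum_A: "2 \<le> (\<Sum>S\<in>A. Poly_Mapping.lookup m S)"
    unfolding vertex_degree_def A_def by (simp add: sum.inter_filter[symmetric])
  have A: "S \<in> V" "i \<in> S" "Poly_Mapping.lookup m S \<noteq> 0" if "S \<in> A" for S
    using that assms(1) by (auto simp: A_def in_keys_iff)
  show ?thesis
  proof (cases "\<exists>S\<in>A. 2 \<le> Poly_Mapping.lookup m S")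
    case True
    then obtain S where S: "S \<in> A" "2 \<le> Poly_Mapping.lookup m S" by blast
    then have "Poly_Mapping.lookup (pair_monom S S) U \<le> Poly_Mapping.lookup m U" for U
      by (auto simp: lookup_add lookup_single when_def)
    with A[OF S(1)] below[of S S] that[of S S] show ?thesis by blast
  next
    case False
    with A have "\<forall>S\<in>A. Poly_Mapping.lookup m S = 1"
      by (metis One_nat_def less_2_cases_iff not_le)
    with sum_A have "2 \<le> card A" by simp
    moreover have "finite A"
      by (simp add: A_def)
    ultimately obtain S T where "S \<in> A" "T \<in> A" "S \<noteq> T"
      by (metis One_nat_def card_le_Suc0_iff_eq not_less_eq_eq numeral_2_eq_2)
    with \<open>\<forall>S\<in>A. _\<close> have "Poly_Mapping.lookup (pair_monom S T) U \<le> Poly_Mapping.lookup m U" for U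
      by (auto simp: lookup_add lookup_single when_def)
    with A \<open>S \<in> A\<close> \<open>T \<in> A\<close> below[of S T] that[of S T] show ?thesis by blast
  qed
qed

lemma var_mult_var: "var S * var T = (monom_poly (pair_monom S T) :: ('v, 'k::comm_ring_1) mpoly)"
  by (simp add: var_def monom_poly_def mult_single)

lemma keys_pair_monom: "S \<in> V \<Longrightarrow> T \<in> V \<Longrightarrow> Poly_Mapping.keys (pair_monom S T) \<subseteq> V"
  by (simp add: keys_add_monom)

lemma J_gensE:
  assumes "b \<in> J_gens d E"
  obtains S1 S2 S3 S4 where "S1 \<in> stable_sets d E" "S2 \<in> stable_sets d E"
    "S3 \<in> stable_sets d E" "S4 \<in> stable_sets d E"
    "S1 \<inter> S2 = {}" "S3 \<inter> S4 = {}" "S1 \<union> S2 = S3 \<union> S4"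
    "b = monom_poly (pair_monom S1 S2) - monom_poly (pair_monom S3 S4)"
  using assms unfolding J_gens_def by (auto simp: var_mult_var)

lemma M_gensE:
  assumes "b \<in> M_gens d E"
  obtains S T where "S \<in> stable_sets d E" "T \<in> stable_sets d E" "S \<inter> T \<noteq> {}"
    "b = monom_poly (pair_monom S T)"
  using assms unfolding M_gens_def by (auto simp: var_mult_var)

lemma keys_monom_poly_diff:
  "Poly_Mapping.keys (monom_poly a - monom_poly a' :: ('v, 'k::comm_ring_1) mpoly) \<subseteq> {a, a'}"
  using keys_diff[of "monom_poly a :: ('v, 'k) mpoly" "monom_poly a'"] by (simp add: monom_poly_def insert_commute)

lemma J_gens_subset_poly_ring: "(J_gens d E :: (nat set, 'k::comm_ring_1) mpoly set) \<subseteq> poly_ring (stable_sets d E)"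
proof
  fix b :: "(nat set, 'k) mpoly" assume "b \<in> J_gens d E"
  then obtain S1 S2 S3 S4 where S: "S1 \<in> stable_sets d E" "S2 \<in> stable_sets d E"
    "S3 \<in> stable_sets d E" "S4 \<in> stable_sets d E"
    "b = monom_poly (pair_monom S1 S2) - monom_poly (pair_monom S3 S4)"
    by (rule J_gensE)
  show "b \<in> poly_ring (stable_sets d E)"
  proof (rule poly_ringI)
    fix m assume "m \<in> Poly_Mapping.keys b"
    then have "m = pair_monom S1 S2 \<or> m = pair_monom S3 S4"
      using keys_monom_poly_diff S(5) by blast
    then show "Poly_Mapping.keys m \<subseteq> stable_sets d E"
      using S(1-4) keys_pair_monom by metis
  qed
qed

lemma M_gens_subset_poly_ring: "(M_gens d E :: (nat set, 'k::comm_ring_1) mpoly set) \<subseteq> poly_ring (stable_sets d E)"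
proof
  fix b :: "(nat set, 'k) mpoly" assume "b \<in> M_gens d E"
  then obtain S T where "S \<in> stable_sets d E" "T \<in> stable_sets d E" "S \<inter> T \<noteq> {}"
    "b = monom_poly (pair_monom S T)"
    by (rule M_gensE)
  then show "b \<in> poly_ring (stable_sets d E)"
    by (simp add: monom_poly_def poly_ring_single keys_add_monom)
qed

lemma J_ideal_subset_poly_ring: "(J_ideal d E :: (nat set, 'k::comm_ring_1) mpoly set) \<subseteq> poly_ring (stable_sets d E)"
  unfolding J_ideal_def by (rule ideal_gen_subset_poly_ring[OF J_gens_subset_poly_ring])

lemma K_ideal_subset_poly_ring: "(K_ideal d E :: (nat set, 'k::comm_ring_1) mpoly set) \<subseteq> poly_ring (stable_sets d E)"
  unfolding K_ideal_def
  using J_gens_subset_poly_ring M_gens_subset_poly_ring by (intro ideal_gen_subset_poly_ring) blast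

lemma J_ideal_subset_K_ideal: "(J_ideal d E :: (nat set, 'k::comm_ring_1) mpoly set) \<subseteq> K_ideal d E"
  unfolding J_ideal_def K_ideal_def by (rule ideal_gen_mono) blast

lemma M_gens_subset_K_ideal: "(M_gens d E :: (nat set, 'k::comm_ring_1) mpoly set) \<subseteq> K_ideal d E"
  unfolding K_ideal_def by (auto intro: ideal_gen_base)

lemma finite_M_gens: "finite (M_gens d E :: (nat set, 'k::comm_ring_1) mpoly set)"
proof -
  have "finite (stable_sets d E)"
    by (rule finite_subset[of _ "Pow {1..d}"]) (auto simp: stable_sets_def)
  moreover have "(M_gens d E :: (nat set, 'k) mpoly set) \<subseteq> (\<lambda>(S, T). var S * var T) ` (stable_sets d E \<times> stable_sets d E)"
    unfolding M_gens_def by auto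
  ultimately show ?thesis
    by (meson finite_SigmaI finite_imageI finite_subset)
qed

lemma keys_M_ideal:
  assumes "p \<in> (M_ideal d E :: (nat set, 'k::comm_ring_1) mpoly set)" "m \<in> Poly_Mapping.keys p"
  shows "\<not> pairwise_disjoint_monom m"
proof -
  obtain b a k where b: "b \<in> (M_gens d E :: (nat set, 'k) mpoly set)" "a \<in> Poly_Mapping.keys b" "m = k + a"
    using assms unfolding M_ideal_def by (rule keys_ideal_gen)
  from b(1) obtain S T where "S \<in> stable_sets d E" "T \<in> stable_sets d E" "S \<inter> T \<noteq> {}"
    "b = monom_poly (pair_monom S T)"
    by (rule M_gensE)
  with b(2) have "a = pair_monom S T"
    by (simp add: monom_poly_def)
  with b(3) not_pairwise_disjoint_add[OF not_pairwise_disjoint_pair[OF \<open>S \<inter> T \<noteq> {}\<close>]] show ?thesis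
    by simp
qed

lemma M_ideal_of_keys:
  assumes "p \<in> poly_ring (stable_sets d E)" "\<And>m. m \<in> Poly_Mapping.keys p \<Longrightarrow> \<not> pairwise_disjoint_monom m"
  shows "(p :: (nat set, 'k::comm_ring_1) mpoly) \<in> M_ideal d E"
proof -
  have "Poly_Mapping.single m (Poly_Mapping.lookup p m) \<in> M_ideal d E" if m: "m \<in> Poly_Mapping.keys p" for m
  proof -
    obtain S T k where S: "S \<in> stable_sets d E" "T \<in> stable_sets d E" "S \<inter> T \<noteq> {}"
      "m = k + pair_monom S T"
      using not_pairwise_disjoint_obtain_pair[OF poly_ringD[OF assms(1) m] assms(2)[OF m]] .
    have "var S * var T \<in> (M_ideal d E :: (nat set, 'k) mpoly set)"
      unfolding M_ideal_def M_gens_def using S by (intro ideal_gen_base) blast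
    moreover have "Poly_Mapping.keys k \<subseteq> stable_sets d E"
      using poly_ringD[OF assms(1) m] S(4) by (simp add: keys_add_monom)
    ultimately have "Poly_Mapping.single k (Poly_Mapping.lookup p m) * (var S * var T) \<in> M_ideal d E"
      unfolding M_ideal_def by (rule ideal_gen_mult[OF _ poly_ring_single])
    then show ?thesis
      by (simp add: S(4) var_mult_var monom_poly_def mult_single)
  qed
  then have "(\<Sum>m\<in>Poly_Mapping.keys p. Poly_Mapping.single m (Poly_Mapping.lookup p m)) \<in> M_ideal d E"
    unfolding M_ideal_def by (rule ideal_gen_sum)
  then show ?thesis
    by (simp add: sum_single_lookup)
qed

lemma restrict_poly_J_ideal:
  assumes "p \<in> (J_ideal d E :: (nat set, 'k::comm_ring_1) mpoly set)"
    and P: "\<And>m m'. vertex_degree m = vertex_degree m' \<Longrightarrow> P m = P m'"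
  shows "restrict_poly P p \<in> J_ideal d E"
  using assms(1) unfolding J_ideal_def
proof (rule restrict_poly_ideal_gen)
  fix b a a' k assume "b \<in> J_gens d E" "a \<in> Poly_Mapping.keys b" "a' \<in> Poly_Mapping.keys b"
  from \<open>b \<in> J_gens d E\<close> obtain S1 S2 S3 S4 where "S1 \<in> stable_sets d E" "S2 \<in> stable_sets d E"
    "S3 \<in> stable_sets d E" "S4 \<in> stable_sets d E"
    and S: "S1 \<inter> S2 = {}" "S3 \<inter> S4 = {}" "S1 \<union> S2 = S3 \<union> S4"
    and b: "b = monom_poly (pair_monom S1 S2) - monom_poly (pair_monom S3 S4)"
    by (rule J_gensE)
  have "vertex_degree (pair_monom S1 S2) = vertex_degree (pair_monom S3 S4)"
    using S(1-3) unfolding fun_eq_iff vertex_degree_pair by auto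
  moreover have "a \<in> {pair_monom S1 S2, pair_monom S3 S4}" "a' \<in> {pair_monom S1 S2, pair_monom S3 S4}"
    using \<open>a \<in> _\<close> \<open>a' \<in> _\<close> keys_monom_poly_diff unfolding b by blast+
  ultimately have "vertex_degree (k + a) = vertex_degree (k + a')"
    by (auto simp: vertex_degree_add fun_eq_iff)
  then show "P (k + a) = P (k + a')"
    by (rule P)
qed

lemma keys_K_ideal_degree:
  assumes "p \<in> (K_ideal d E :: (nat set, 'k::comm_ring_1) mpoly set)" "m \<in> Poly_Mapping.keys p"
  shows "2 \<le> monom_degree m"
proof -
  obtain b a k where b: "b \<in> (J_gens d E \<union> M_gens d E :: (nat set, 'k) mpoly set)"
    "a \<in> Poly_Mapping.keys b" "m = k + a"
    using assms unfolding K_ideal_def by (rule keys_ideal_gen)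
  from b(1) have "\<exists>S T. a = pair_monom S T"
  proof
    assume "b \<in> J_gens d E"
    then obtain S1 S2 S3 S4 where "S1 \<in> stable_sets d E" "S2 \<in> stable_sets d E"
      "S3 \<in> stable_sets d E" "S4 \<in> stable_sets d E"
      "S1 \<inter> S2 = {}" "S3 \<inter> S4 = {}" "S1 \<union> S2 = S3 \<union> S4"
      and "b = monom_poly (pair_monom S1 S2) - monom_poly (pair_monom S3 S4)"
      by (rule J_gensE)
    with b(2) keys_monom_poly_diff show ?thesis
      by blast
  next
    assume "b \<in> M_gens d E"
    then obtain S T where "S \<in> stable_sets d E" "T \<in> stable_sets d E" "S \<inter> T \<noteq> {}"
      "b = monom_poly (pair_monom S T)"
      by (rule M_gensE)
    with b(2) show ?thesis
      by (auto simp: monom_poly_def)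
  qed
  then have "monom_degree a = 2"
    using monom_degree_pair by metis
  with b(3) show ?thesis
    by (simp add: monom_degree_add)
qed

lemma restrict_poly_K_ideal:
  assumes "p \<in> (K_ideal d E :: (nat set, 'k::comm_ring_1) mpoly set)"
  shows "restrict_poly pairwise_disjoint_monom p \<in> J_ideal d E"
proof -
  obtain j q where jq: "j \<in> J_ideal d E" "q \<in> M_ideal d E" "p = j + q"
    using assms unfolding K_ideal_def J_ideal_def M_ideal_def by (rule ideal_gen_Un_decomp)
  have "restrict_poly pairwise_disjoint_monom q = 0"
    using keys_M_ideal[OF jq(2)] by (rule restrict_poly_eq_zero)
  then have "restrict_poly pairwise_disjoint_monom p = restrict_poly pairwise_disjoint_monom j"
    by (simp add: jq(3) restrict_poly_add)
  also have "\<dots> \<in> J_ideal d E"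
    using jq(1) by (rule restrict_poly_J_ideal) (simp add: pairwise_disjoint_monom_def)
  finally show ?thesis .
qed

lemma not_pairwise_disjoint_lm_divisible:
  assumes mo: "monomial_order (stable_sets d E) lt"
    and m: "Poly_Mapping.keys m \<subseteq> stable_sets d E" "\<not> pairwise_disjoint_monom m"
  shows "\<exists>g\<in>M_gens d E. g \<noteq> (0 :: (nat set, 'k::comm_ring_1) mpoly) \<and> (\<exists>k. m = k + lm lt g)"
proof -
  obtain S T k where S: "S \<in> stable_sets d E" "T \<in> stable_sets d E" "S \<inter> T \<noteq> {}"
    "m = k + pair_monom S T"
    using not_pairwise_disjoint_obtain_pair[OF m] .
  have "var S * var T \<in> (M_gens d E :: (nat set, 'k) mpoly set)"
    unfolding M_gens_def using S(1-3) by (intro CollectI exI[of _ S] exI[of _ T]) simp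
  moreover have "lm lt (var S * var T :: (nat set, 'k) mpoly) = pair_monom S T"
    unfolding var_mult_var monom_poly_def by (rule lm_single[OF mo keys_pair_monom[OF S(1,2)]]) simp
  moreover have "var S * var T \<noteq> (0 :: (nat set, 'k) mpoly)"
    by (simp add: var_mult_var monom_poly_neq_zero)
  ultimately show ?thesis
    using S(4) by (intro bexI[of _ "var S * var T"]) auto
qed

lemma M_gens_lmE:
  assumes mo: "monomial_order (stable_sets d E) lt" and "g \<in> (M_gens d E :: (nat set, 'k::comm_ring_1) mpoly set)"
  obtains S T where "S \<inter> T \<noteq> {}" "g = monom_poly (pair_monom S T)" "lm lt g = pair_monom S T" "lc lt g = 1"
proof -
  obtain S T where S: "S \<in> stable_sets d E" "T \<in> stable_sets d E" "S \<inter> T \<noteq> {}"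
    "g = monom_poly (pair_monom S T)"
    using assms(2) by (rule M_gensE)
  have "lm lt g = pair_monom S T"
    unfolding S(4) monom_poly_def by (rule lm_single[OF mo keys_pair_monom[OF S(1,2)]]) simp
  moreover have "lc lt g = 1"
    unfolding S(4) monom_poly_def by (rule lc_single[OF mo keys_pair_monom[OF S(1,2)]]) simp
  ultimately show ?thesis
    using S(3,4) that by blast
qed

section \<open>The Groebner basis of \<open>K\<^sub>G\<close>\<close>

lemma J_basis_keys_pairwise_disjoint:
  fixes G1 :: "(nat set, 'k::comm_ring_1) mpoly set"
  assumes mo: "monomial_order (stable_sets d E) lt"
    and rgb: "reduced_groebner_basis (stable_sets d E) lt (J_ideal d E) G1"
    and g: "g \<in> G1" "g \<notin> M_ideal d E" and m: "m \<in> Poly_Mapping.keys g"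
  shows "pairwise_disjoint_monom m"
proof -
  have "(\<forall>m\<in>Poly_Mapping.keys g. pairwise_disjoint_monom m) \<or>
      (\<forall>m\<in>Poly_Mapping.keys g. \<not> pairwise_disjoint_monom m)"
    using mo rgb J_ideal_subset_poly_ring _ _ g(1)
    by (rule reduced_groebner_basis_keys_uniform)
      (rule restrict_poly_J_ideal, assumption, simp add: pairwise_disjoint_monom_def)+
  moreover have "g \<in> poly_ring (stable_sets d E)"
    using reduced_groebner_basis_subset_poly_ring[OF rgb J_ideal_subset_poly_ring] g(1) by blast
  ultimately show ?thesis
    using M_ideal_of_keys g(2) m by blast
qed

lemma K_ideal_lm_divisible:
  fixes G1 :: "(nat set, 'k::comm_ring_1) mpoly set" and p :: "(nat set, 'k) mpoly"
  assumes mo: "monomial_order (stable_sets d E) lt"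
    and rgb: "reduced_groebner_basis (stable_sets d E) lt (J_ideal d E) G1"
    and p: "p \<in> K_ideal d E" "p \<noteq> 0"
  shows "\<exists>g\<in>(G1 - M_ideal d E) \<union> M_gens d E. g \<noteq> 0 \<and> (\<exists>k. lm lt p = k + lm lt g)"
proof (cases "pairwise_disjoint_monom (lm lt p)")
  case False
  have "Poly_Mapping.keys (lm lt p) \<subseteq> stable_sets d E"
    using p K_ideal_subset_poly_ring lm_greatest(1)[OF mo] by (blast dest: poly_ringD)
  with not_pairwise_disjoint_lm_divisible[OF mo _ False] show ?thesis
    by blast
next
  case True
  define r where "r = restrict_poly pairwise_disjoint_monom p"
  have r: "r \<in> J_ideal d E"
    unfolding r_def using p(1) by (rule restrict_poly_K_ideal)
  have pP: "p \<in> poly_ring (stable_sets d E)"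
    using p(1) K_ideal_subset_poly_ring by blast
  have keys_r: "Poly_Mapping.keys r = {m \<in> Poly_Mapping.keys p. pairwise_disjoint_monom m}"
    by (simp add: r_def keys_restrict_poly)
  with lm_greatest(1)[OF mo pP p(2)] True have "r \<noteq> 0" and lm_p_r: "lm lt p \<in> Poly_Mapping.keys r"
    by auto
  moreover have "lm lt r = lm lt p"
    using r J_ideal_subset_poly_ring keys_r lm_p_r
    by (intro lm_eq_of_keys_subset[OF mo pP p(2)]) auto
  ultimately obtain h k where h: "h \<in> G1" "h \<noteq> 0" "lm lt p = k + lm lt h"
    using groebner_basis_lm_divisible[OF reduced_groebner_basisD(1)[OF rgb] r] by metis
  have "h \<notin> M_ideal d E"
  proof
    assume "h \<in> M_ideal d E"
    moreover have "h \<in> poly_ring (stable_sets d E)"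
      using reduced_groebner_basis_subset_poly_ring[OF rgb J_ideal_subset_poly_ring] h(1) by blast
    ultimately have "\<not> pairwise_disjoint_monom (lm lt h)"
      using keys_M_ideal lm_greatest(1)[OF mo _ h(2)] by blast
    with h(3) True show False
      using not_pairwise_disjoint_add by metis
  qed
  with h show ?thesis
    by blast
qed

lemma M_gens_irreducible:
  fixes G1 :: "(nat set, 'k::comm_ring_1) mpoly set"
  assumes mo: "monomial_order (stable_sets d E) lt"
    and rgb: "reduced_groebner_basis (stable_sets d E) lt (J_ideal d E) G1"
    and g: "g \<in> M_gens d E" and h: "h \<in> (G1 - M_ideal d E) \<union> M_gens d E" "h \<noteq> g" "h \<noteq> 0"
    and m: "m \<in> Poly_Mapping.keys g"
  shows "m \<noteq> k + lm lt h"
proof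
  assume m_eq: "m = k + lm lt h"
  obtain S T where ST: "S \<inter> T \<noteq> {}" "g = monom_poly (pair_monom S T)"
    using M_gens_lmE[OF mo g] by metis
  then have m_ST: "m = pair_monom S T"
    using m by (simp add: monom_poly_def)
  have "h \<in> K_ideal d E"
    using h(1) reduced_groebner_basisD(3)[OF rgb] J_ideal_subset_K_ideal M_gens_subset_K_ideal by blast
  then have "2 \<le> monom_degree (lm lt h)"
    using keys_K_ideal_degree lm_greatest(1)[OF mo _ h(3)] K_ideal_subset_poly_ring by blast
  moreover have "monom_degree m = 2"
    using m_ST monom_degree_pair by metis
  ultimately have "monom_degree k = 0"
    using m_eq by (simp add: monom_degree_add)
  with m_eq m_ST have lm_h: "lm lt h = pair_monom S T"
    by (simp add: monom_degree_eq_0_iff)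
  show False
  proof (cases "h \<in> M_gens d E")
    case True
    then have "h = monom_poly (lm lt h)"
      using M_gens_lmE[OF mo] by metis
    with lm_h ST(2) h(2) show False
      by simp
  next
    case False
    with h have "pairwise_disjoint_monom (lm lt h)"
      using J_basis_keys_pairwise_disjoint[OF mo rgb] lm_greatest(1)[OF mo _ h(3)]
        reduced_groebner_basis_subset_poly_ring[OF rgb J_ideal_subset_poly_ring] by blast
    with lm_h not_pairwise_disjoint_pair[OF ST(1)] show False
      by simp
  qed
qed

lemma J_basis_irreducible:
  fixes G1 :: "(nat set, 'k::comm_ring_1) mpoly set"
  assumes mo: "monomial_order (stable_sets d E) lt"
    and rgb: "reduced_groebner_basis (stable_sets d E) lt (J_ideal d E) G1"
    and g: "g \<in> G1" "g \<notin> M_ideal d E" and h: "h \<in> (G1 - M_ideal d E) \<union> M_gens d E" "h \<noteq> g" "h \<noteq> 0"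
    and m: "m \<in> Poly_Mapping.keys g"
  shows "m \<noteq> k + lm lt h"
proof
  assume m_eq: "m = k + lm lt h"
  show False
  proof (cases "h \<in> M_gens d E")
    case True
    then obtain S T where "S \<inter> T \<noteq> {}" "lm lt h = pair_monom S T"
      using M_gens_lmE[OF mo] by metis
    then have "\<not> pairwise_disjoint_monom m"
      unfolding m_eq by (metis not_pairwise_disjoint_add not_pairwise_disjoint_pair)
    with J_basis_keys_pairwise_disjoint[OF mo rgb g m] show False
      by contradiction
  next
    case False
    with h have "h \<in> G1 - {g}"
      by blast
    have "Poly_Mapping.keys (k + lm lt h) \<subseteq> stable_sets d E"
      using reduced_groebner_basis_subset_poly_ring[OF rgb J_ideal_subset_poly_ring] g(1) m m_eq
      by (blast dest: poly_ringD)
    then have "Poly_Mapping.keys k \<subseteq> stable_sets d E"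
      by (simp add: keys_add_monom)
    with \<open>h \<in> G1 - {g}\<close> h(3) have "monom_poly m \<in> lm_ideal (stable_sets d E) lt (G1 - {g})"
      unfolding m_eq by (rule mem_lm_idealI)
    with reduced_groebner_basisD(6)[OF rgb g(1) m] show False
      by contradiction
  qed
qed

theorem proposition6p4:
  fixes d :: nat and E :: "nat set set"
    and lt :: "nat set monom \<Rightarrow> nat set monom \<Rightarrow> bool"
    and G1 :: "(nat set, 'k::field) mpoly set"
  assumes "simple_graph d E"
    and "monomial_order (stable_sets d E) lt"
    and "reduced_groebner_basis (stable_sets d E) lt (J_ideal d E) G1"
  shows "reduced_groebner_basis (stable_sets d E) lt (K_ideal d E)
           ((G1 - M_ideal d E) \<union> M_gens d E)"
proof -
  note mo = assms(2) and rgb = assms(3)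
  let ?G = "(G1 - M_ideal d E) \<union> M_gens d E"
  have "groebner_basis (stable_sets d E) lt (K_ideal d E) ?G"
  proof (rule groebner_basisI[OF mo])
    show "finite ?G"
      using reduced_groebner_basisD(2)[OF rgb] finite_M_gens by blast
    show "?G \<subseteq> K_ideal d E"
      using reduced_groebner_basisD(3)[OF rgb] J_ideal_subset_K_ideal M_gens_subset_K_ideal by blast
    show "K_ideal d E \<subseteq> poly_ring (stable_sets d E)"
      by (rule K_ideal_subset_poly_ring)
  qed (rule K_ideal_lm_divisible[OF mo rgb])
  then show ?thesis
  proof (rule reduced_groebner_basisI)
    fix g assume "g \<in> ?G"
    then show "g \<noteq> 0 \<and> lc lt g = 1"
    proof
      assume "g \<in> M_gens d E"
      then show ?thesis
        by (rule M_gens_lmE[OF mo]) (simp add: monom_poly_neq_zero)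
    qed (simp add: reduced_groebner_basisD(4,5)[OF rgb])
  next
    fix g h m k
    assume g: "g \<in> ?G" and h: "h \<in> ?G - {g}" "h \<noteq> 0" and m: "m \<in> Poly_Mapping.keys g"
    from h(1) have h': "h \<in> ?G" "h \<noteq> g"
      by auto
    from g show "m \<noteq> k + lm lt h"
    proof
      assume "g \<in> G1 - M_ideal d E"
      with J_basis_irreducible[OF mo rgb _ _ h' h(2) m] show ?thesis
        by blast
    next
      assume "g \<in> M_gens d E"
      from M_gens_irreducible[OF mo rgb this h' h(2) m] show ?thesis .
    qed
  qed
qed

end
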